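(* Let $m\in\mathbb{N}$ with $m\ge1$. If $m\not\equiv 6\pmod{12}$, then the friendship graph $F_j$ is $\mathbb{Z}_m$-cordial for all $0\le j\le\lfloor m/3\rfloor$. If $m\equiv 6\pmod{12}$, then $F_j$ is $\mathbb{Z}_m$-cordial for all $0\le j\le\lfloor m/3\rfloor-1$.
   Context: Graphs are finite, simple and undirected. For $n\in\mathbb{N}$, the friendship graph $F_n$ is the union of $n$ copies of the triangle $C_3$ joined at a single common (central) vertex. For an abelian group $A$ and a graph $G=(V,E)$, a vertex labeling $\ell:V\to A$ induces an edge labeling $\ell(\{v_1,v_2\})=\ell(v_1)+\ell(v_2)$. Let $f_V(a)=|\{v\in V:\ell(v)=a\}|$ and $f_E(a)=|\{e\in E:\ell(e)=a\}|$. The labeling is $A$-cordial if $|f_V(a_1)-f_V(a_2)|\le 1$ and $|f_E(a_1)-f_E(a_2)|\le 1$ for all $a_1,a_2\in A$; $G$ is $A$-cordial if it admits an $A$-cordial labeling. *)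

theory Defs
  imports Main
begin

text \<open>A finite simple graph is given by a vertex set V and an edge set E of
  two-element subsets of V.  The cyclic group Z_m is represented by the
  residues {0..<m} with addition modulo m.\<close>

definition simple_graph :: "'v set \<Rightarrow> 'v set set \<Rightarrow> bool" where
  "simple_graph V E \<longleftrightarrow> finite V \<and> (\<forall>e\<in>E. e \<subseteq> V \<and> card e = 2)"

definition edge_label :: "nat \<Rightarrow> ('v \<Rightarrow> nat) \<Rightarrow> 'v set \<Rightarrow> nat" where
  "edge_label m l e = (\<Sum>v\<in>e. l v) mod m"

definition vcount :: "'v set \<Rightarrow> ('v \<Rightarrow> nat) \<Rightarrow> nat \<Rightarrow> nat" where
  "vcount V l a = card {v\<in>V. l v = a}"

definition ecount :: "nat \<Rightarrow> 'v set set \<Rightarrow> ('v \<Rightarrow> nat) \<Rightarrow> nat \<Rightarrow> nat" where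
  "ecount m E l a = card {e\<in>E. edge_label m l e = a}"

definition Zm_cordial_labeling :: "nat \<Rightarrow> 'v set \<Rightarrow> 'v set set \<Rightarrow> ('v \<Rightarrow> nat) \<Rightarrow> bool" where
  "Zm_cordial_labeling m V E l \<longleftrightarrow>
     (\<forall>v\<in>V. l v < m) \<and>
     (\<forall>a1<m. \<forall>a2<m. vcount V l a1 \<le> vcount V l a2 + 1) \<and>
     (\<forall>a1<m. \<forall>a2<m. ecount m E l a1 \<le> ecount m E l a2 + 1)"

definition Zm_cordial :: "nat \<Rightarrow> 'v set \<Rightarrow> 'v set set \<Rightarrow> bool" where
  "Zm_cordial m V E \<longleftrightarrow> (\<exists>l. Zm_cordial_labeling m V E l)"

definition friendship_V :: "nat \<Rightarrow> nat set" where
  "friendship_V n = {0..2*n}"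

definition friendship_E :: "nat \<Rightarrow> nat set set" where
  "friendship_E n = (\<Union>i\<in>{1..n}. {{0, 2*i-1}, {0, 2*i}, {2*i-1, 2*i}})"

end

theory Submission
  imports Defs
begin

(*
  A labeling that is injective on the vertices and on the edges is trivially cordial. The
  centre of F_j is labelled 0 and the outer vertices of the i-th triangle X i and Y i, so it
  suffices to find nonzero X i, Y i such that the 3j residues X i, Y i, X i + Y i (mod m) are
  pairwise distinct.

  If j is odd, or j is even and 3j < m, take the X i consecutive and let the Y i run through the
  next interval in two interleaved decreasing progressions; then the sums X i + Y i are distinct
  and lie in a window shorter than m. Otherwise m = 3j with j even, and m mod 12 <> 6 forces
  4 | j. Then a Skolem sequence of order j (pairs (a d, a d + d), d = 1..j, partitioning
  {1..2j}), which exists since 4 | j, gives triangle d the labels d, a d + j and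
  a d + d + j: every residue mod 3j is used exactly once.
*)

lemma card_fiber_le_one:
  assumes "inj_on f A"
  shows "card {x\<in>A. f x = a} \<le> 1"
proof (cases "{x\<in>A. f x = a} = {}")
  case True
  show ?thesis unfolding True by simp
next
  case False
  then obtain x where "x \<in> A" "f x = a" by blast
  with assms have "{x\<in>A. f x = a} = {x}" by (auto dest: inj_onD)
  then show ?thesis by simp
qed

lemma inj_on_mod_if_range:
  fixes f :: "'a \<Rightarrow> nat"
  assumes "inj_on f A" "f ` A \<subseteq> {c..<c+m}"
  shows "inj_on (\<lambda>x. f x mod m) A"
proof -
  have "inj_on (\<lambda>y. y mod m) {c..<c+m}"
  proof (rule linorder_inj_onI')
    fix x y assume x: "x \<in> {c..<c+m}" and y: "y \<in> {c..<c+m}" and "x < y"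
    show "x mod m \<noteq> y mod m"
    proof
      assume "x mod m = y mod m"
      then obtain k where "y = x + m * k" using \<open>x < y\<close> by (elim mod_eq_nat2E) auto
      with \<open>x < y\<close> have "m \<le> y - x" by (cases k) auto
      with x y show False by auto
    qed
  qed
  then show ?thesis
    using comp_inj_on[OF assms(1) inj_on_subset[OF _ assms(2)]] by (simp add: comp_def)
qed

lemma Zm_cordial_labeling_if_inj:
  assumes "\<forall>v\<in>V. l v < m" "inj_on l V" "inj_on (edge_label m l) E"
  shows "Zm_cordial_labeling m V E l"
proof -
  have vcount: "vcount V l a \<le> 1" for a
    unfolding vcount_def by (rule card_fiber_le_one[OF assms(2)])
  have ecount: "ecount m E l a \<le> 1" for a
    unfolding ecount_def by (rule card_fiber_le_one[OF assms(3)])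
  show ?thesis
    unfolding Zm_cordial_labeling_def
  proof (intro conjI allI impI)
    fix a1 a2 :: nat
    show "vcount V l a1 \<le> vcount V l a2 + 1" using vcount[of a1] by linarith
    show "ecount m E l a1 \<le> ecount m E l a2 + 1" using ecount[of a1] by linarith
  qed (use assms(1) in blast)
qed

lemma inj_on_nth_tripleI:
  assumes "inj_on x I" "inj_on y I" "inj_on z I"
    and "x ` I \<inter> y ` I = {}" "x ` I \<inter> z ` I = {}" "y ` I \<inter> z ` I = {}"
  shows "inj_on (\<lambda>(i, c). [x i, y i, z i] ! c) (I \<times> {0, 1, 2})"
  using assms by (auto simp: inj_on_def)

lemma inj_on_image_if_inj_on_comp:
  assumes "inj_on g A" "\<And>a. a \<in> A \<Longrightarrow> h (f a) = g a"
  shows "inj_on h (f ` A)"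
  using assms by (intro inj_on_imageI) (auto simp: inj_on_def)

definition friendship_labeling :: "(nat \<Rightarrow> nat) \<Rightarrow> (nat \<Rightarrow> nat) \<Rightarrow> nat \<Rightarrow> nat" where
  "friendship_labeling X Y v = (if v = 0 then 0 else if odd v then X ((v + 1) div 2) else Y (v div 2))"

definition triangle_edge :: "nat \<Rightarrow> nat \<Rightarrow> nat set" where
  "triangle_edge i c = [{0, 2*i - 1}, {0, 2*i}, {2*i - 1, 2*i}] ! c"

lemma friendship_E_eq:
  "friendship_E j = (\<lambda>(i, c). triangle_edge i c) ` ({1..j} \<times> {0, 1, 2})"
proof -
  have "{1..j} \<times> {0, 1, 2} = (\<Union>i\<in>{1..j}. {i} \<times> {0, 1, 2::nat})" by auto
  moreover have "(\<lambda>(i, c). triangle_edge i c) ` ({i} \<times> {0, 1, 2}) =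
      {{0, 2*i - 1}, {0, 2*i}, {2*i - 1, 2*i}}" for i
    by (simp add: triangle_edge_def)
  ultimately show ?thesis by (simp add: friendship_E_def image_UN)
qed

lemma friendship_V_eq:
  "friendship_V j = insert 0 ((\<lambda>(i, c). 2*i - 1 + c) ` ({1..j} \<times> {0, 1}))"
proof
  have "v \<in> (\<lambda>(i, c). 2*i - 1 + c) ` ({1..j} \<times> {0, 1})" if "1 \<le> v" "v \<le> 2*j" for v
  proof
    show "v = (\<lambda>(i, c). 2*i - 1 + c) ((v + 1) div 2, 1 - v mod 2)"
      using that by simp presburger
  qed (use that in auto)
  then show "friendship_V j \<subseteq> insert 0 ((\<lambda>(i, c). 2*i - 1 + c) ` ({1..j} \<times> {0, 1}))"
    unfolding friendship_V_def by (metis atLeastAtMost_iff insertCI less_one not_le subsetI)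
qed (auto simp: friendship_V_def)

lemma Zm_cordial_friendshipI:
  assumes "0 < m" and range: "\<forall>i\<in>{1..j}. 0 < X i \<and> X i < m \<and> 0 < Y i \<and> Y i < m"
    and distinct: "inj_on (\<lambda>(i, c). [X i, Y i, (X i + Y i) mod m] ! c) ({1..j} \<times> {0, 1, 2})"
  shows "Zm_cordial m (friendship_V j) (friendship_E j)"
proof -
  let ?l = "friendship_labeling X Y"
  let ?T = "\<lambda>(i, c). [X i, Y i, (X i + Y i) mod m] ! c"
  let ?vertex = "\<lambda>(i, c). 2*i - 1 + c"
  have label_center: "?l 0 = 0"
    by (simp add: friendship_labeling_def)
  have label_odd: "?l (2*i - 1) = X i" and label_even: "?l (2*i) = Y i" if "1 \<le> i" for i
    using that by (simp_all add: friendship_labeling_def)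
  have vertex_label: "?l (?vertex p) = ?T p" if "p \<in> {1..j} \<times> {0, 1}" for p
    using that label_odd label_even by auto
  have edge_label: "edge_label m ?l ((\<lambda>(i, c). triangle_edge i c) p) = ?T p"
    if "p \<in> {1..j} \<times> {0, 1, 2}" for p
    using that range label_center label_odd label_even by (auto simp: edge_label_def triangle_edge_def)
  have label_range: "0 < ?l v \<and> ?l v < m" if "v \<in> friendship_V j" "v \<noteq> 0" for v
  proof -
    have "(v + 1) div 2 \<in> {1..j}" "even v \<Longrightarrow> v div 2 \<in> {1..j}"
      using that by (auto simp: friendship_V_def)
    then show ?thesis using range that(2) by (auto simp: friendship_labeling_def)
  qed
  have "inj_on ?T ({1..j} \<times> {0, 1})"
    by (rule inj_on_subset[OF distinct]) auto
  then have "inj_on ?l (?vertex ` ({1..j} \<times> {0, 1}))"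
    using vertex_label by (rule inj_on_image_if_inj_on_comp)
  moreover have "?l 0 \<notin> ?l ` (friendship_V j - {0})"
    using label_range label_center by fastforce
  ultimately have "inj_on ?l (friendship_V j)"
    unfolding friendship_V_eq by simp
  moreover have "inj_on (edge_label m ?l) (friendship_E j)"
    unfolding friendship_E_eq using distinct edge_label by (rule inj_on_image_if_inj_on_comp)
  moreover have "\<forall>v\<in>friendship_V j. ?l v < m"
    using \<open>0 < m\<close> label_range by (auto simp: friendship_labeling_def)
  ultimately show ?thesis
    unfolding Zm_cordial_def by (blast intro: Zm_cordial_labeling_if_inj)
qed

text \<open>Two decreasing runs of step 2 and opposite parity.\<close>

definition zigzag :: "nat \<Rightarrow> nat \<Rightarrow> nat \<Rightarrow> nat" where
  "zigzag g e i = (if i \<le> g + 1 then 5*g + 4 + 2*e - 2*i else 7*g + 5 + 4*e - 2*i)"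

lemma inj_on_zigzag: "inj_on (zigzag g e) {1..2*g + 1 + e}"
proof (rule linorder_inj_onI')
  fix i i' assume i: "i \<in> {1..2*g + 1 + e}" and i': "i' \<in> {1..2*g + 1 + e}" and "i < i'"
  consider "i' \<le> g + 1" | "g + 1 < i" | "i \<le> g + 1" "g + 1 < i'" by linarith
  then show "zigzag g e i \<noteq> zigzag g e i'"
  proof cases
    case 3
    then have "zigzag g e i + 2*i = 5*g + 4 + 2*e" "zigzag g e i' + 2*i' = 7*g + 5 + 4*e"
      using i i' by (auto simp: zigzag_def)
    then show ?thesis by presburger
  qed (use i i' \<open>i < i'\<close> in \<open>auto simp: zigzag_def\<close>)
qed

lemma Zm_cordial_friendship_zigzag:
  assumes "e \<le> 1" and m: "3 * (2*g + 1 + e) + e \<le> m"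
  shows "Zm_cordial m (friendship_V (2*g + 1 + e)) (friendship_E (2*g + 1 + e))"
proof -
  define I where "I = {1..2*g + 1 + e}"
  define X where "X i = g + e + i" for i
  define Y where "Y = zigzag g e"
  define S where "S i = X i + Y i" for i
  \<comment> \<open>along each run \<open>S\<close> decreases by 1, and the two runs of sums are adjacent intervals\<close>
  have S_eq: "S i = (if i \<le> g + 1 then 6*g + 4 + 3*e - i else 8*g + 5 + 5*e - i)" if "i \<in> I" for i
    using that by (auto simp: S_def X_def Y_def zigzag_def I_def)
  have X_range: "g + 1 + e \<le> X i \<and> X i \<le> 3*g + 1 + 2*e" if "i \<in> I" for i
    using that by (auto simp: X_def I_def)
  have Y_range: "3*g + 2 + 2*e \<le> Y i \<and> Y i \<le> 5*g + 2 + 3*e" if "i \<in> I" for i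
    using that \<open>e \<le> 1\<close> by (auto simp: Y_def zigzag_def I_def)
  have S_range: "5*g + 3 + 3*e \<le> S i \<and> S i \<le> 7*g + 3 + 5*e" if "i \<in> I" for i
    using that S_eq[OF that] by (auto simp: I_def)
  have "inj_on S I"
    by (auto simp: inj_on_def S_eq I_def split: if_splits)
  then have "inj_on (\<lambda>i. S i mod m) I"
    by (rule inj_on_mod_if_range[where c = "5*g + 3 + 3*e"]) (use S_range m in fastforce)
  have Z_cases: "(X i + Y i) mod m \<le> g + e \<or> 5*g + 3 + 3*e \<le> (X i + Y i) mod m" if "i \<in> I" for i
  proof (cases "S i < m")
    case True
    then show ?thesis using S_range[OF that] by (simp add: S_def)
  next
    case False
    then have "(X i + Y i) mod m = S i - m"
      using S_range[OF that] m by (simp add: S_def le_mod_geq)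
    also have "\<dots> \<le> g + e"
      using S_range[OF that] m by auto
    finally show ?thesis ..
  qed
  have "inj_on X I"
    by (simp add: inj_on_def X_def)
  moreover have "inj_on Y I"
    unfolding Y_def I_def by (rule inj_on_zigzag)
  moreover have "inj_on (\<lambda>i. (X i + Y i) mod m) I"
    using \<open>inj_on (\<lambda>i. S i mod m) I\<close> by (simp add: S_def)
  moreover have "X ` I \<inter> Y ` I = {}" "X ` I \<inter> (\<lambda>i. (X i + Y i) mod m) ` I = {}"
    "Y ` I \<inter> (\<lambda>i. (X i + Y i) mod m) ` I = {}"
    using X_range Y_range Z_cases by fastforce+
  ultimately have "inj_on (\<lambda>(i, c). [X i, Y i, (X i + Y i) mod m] ! c) (I \<times> {0, 1, 2})"
    by (intro inj_on_nth_tripleI)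
  moreover have "\<forall>i\<in>I. 0 < X i \<and> X i < m \<and> 0 < Y i \<and> Y i < m"
    using X_range Y_range m by fastforce
  ultimately show ?thesis
    using m unfolding I_def by (intro Zm_cordial_friendshipI) auto
qed

text \<open>A Skolem sequence of order \<open>n\<close>, recorded by the position \<open>a d\<close> of the first
  occurrence of each \<open>d\<close>: the pairs \<open>{a d, a d + d}\<close> partition \<open>{1..2n}\<close>.\<close>

definition skolem_sequence :: "nat \<Rightarrow> (nat \<Rightarrow> nat) \<Rightarrow> bool" where
  "skolem_sequence n a \<longleftrightarrow>
     (\<forall>d\<in>{1..n}. 1 \<le> a d \<and> a d + d \<le> 2*n) \<and>
     inj_on a {1..n} \<and> inj_on (\<lambda>d. a d + d) {1..n} \<and>
     a ` {1..n} \<inter> (\<lambda>d. a d + d) ` {1..n} = {}"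

lemma Zm_cordial_friendship_skolem:
  assumes "skolem_sequence n a" "0 < n"
  shows "Zm_cordial (3*n) (friendship_V n) (friendship_E n)"
proof -
  define I where "I = {1..n}"
  define b where "b = (\<lambda>d. a d + d)"
  \<comment> \<open>position \<open>p\<close> of the sequence becomes the residue \<open>p + n\<close>, avoiding \<open>1..n\<close>\<close>
  define P where "P = (\<lambda>p. (p + n) mod (3*n))"
  have bounds: "1 \<le> a d" "a d + d \<le> 2*n" if "d \<in> I" for d
    using assms(1) that unfolding skolem_sequence_def I_def by auto
  have a_range: "1 \<le> a d \<and> a d < 2*n" and b_range: "1 \<le> b d \<and> b d \<le> 2*n" if "d \<in> I" for d
    using bounds[OF that] that by (auto simp: I_def b_def)
  have "inj_on P {1..2*n}"
    unfolding P_def by (rule inj_on_mod_if_range[where c = "n + 1"]) auto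
  have P_range: "P p = 0 \<or> n < P p" if "p \<in> {1..2*n}" for p
    using that by (auto simp: P_def mod_if)
  have Y_eq: "a d + n = P (a d)" and Z_eq: "(d + (a d + n)) mod (3*n) = P (b d)" if "d \<in> I" for d
    using a_range[OF that] by (simp_all add: P_def b_def add.commute add.left_commute)
  have a_image: "a ` I \<subseteq> {1..2*n}" and b_image: "b ` I \<subseteq> {1..2*n}"
    using a_range b_range by fastforce+
  have "inj_on a I" "inj_on b I" "a ` I \<inter> b ` I = {}"
    using assms(1) by (simp_all add: skolem_sequence_def I_def b_def)
  have "inj_on (\<lambda>d. a d + n) I"
    using comp_inj_on[OF \<open>inj_on a I\<close> inj_on_subset[OF \<open>inj_on P _\<close> a_image]]
    by (simp add: comp_def Y_eq cong: inj_on_cong)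
  moreover have "inj_on (\<lambda>d. (d + (a d + n)) mod (3*n)) I"
    using comp_inj_on[OF \<open>inj_on b I\<close> inj_on_subset[OF \<open>inj_on P _\<close> b_image]]
    by (simp add: comp_def Z_eq cong: inj_on_cong)
  moreover have "(\<lambda>d. a d + n) ` I \<inter> (\<lambda>d. (d + (a d + n)) mod (3*n)) ` I = {}"
  proof -
    have "(\<lambda>d. a d + n) ` I = P ` a ` I"
      unfolding image_image by (rule image_cong[OF refl Y_eq])
    moreover have "(\<lambda>d. (d + (a d + n)) mod (3*n)) ` I = P ` b ` I"
      unfolding image_image by (rule image_cong[OF refl Z_eq])
    ultimately show ?thesis
      using inj_on_image_Int[OF \<open>inj_on P _\<close> a_image b_image] \<open>a ` I \<inter> b ` I = {}\<close> by simp
  qed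
  moreover have "(\<lambda>d. d) ` I \<inter> (\<lambda>d. a d + n) ` I = {}"
    using a_range by (fastforce simp: I_def)
  moreover have "(\<lambda>d. d) ` I \<inter> (\<lambda>d. (d + (a d + n)) mod (3*n)) ` I = {}"
  proof -
    have "(d + (a d + n)) mod (3*n) = 0 \<or> n < (d + (a d + n)) mod (3*n)" if "d \<in> I" for d
      using P_range[of "b d"] b_range[OF that] Z_eq[OF that] by simp
    then show ?thesis by (fastforce simp: I_def)
  qed
  ultimately have "inj_on (\<lambda>(i, c). [i, a i + n, (i + (a i + n)) mod (3*n)] ! c) (I \<times> {0, 1, 2})"
    by (intro inj_on_nth_tripleI) auto
  moreover have "\<forall>d\<in>I. 0 < d \<and> d < 3*n \<and> 0 < a d + n \<and> a d + n < 3*n"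
    using a_range by (fastforce simp: I_def)
  ultimately show ?thesis
    using \<open>0 < n\<close> unfolding I_def by (intro Zm_cordial_friendshipI) auto
qed

lemma skolem_sequence_4: "skolem_sequence 4 (\<lambda>d. [1, 4, 5, 3] ! (d - 1))"
proof -
  have I: "{1..4::nat} = {1, 2, 3, 4}" by auto
  show ?thesis
    unfolding skolem_sequence_def I by (simp add: numeral_eq_Suc)
qed

text \<open>Skolem's construction for order \<open>4s\<close>. For \<open>s = 1\<close> its three exceptional pairs
  collide, which is why order 4 is treated separately.\<close>

definition skolem_4s :: "nat \<Rightarrow> nat \<Rightarrow> nat" where
  "skolem_4s s d =
     (if even d then 6*s - d div 2
      else if d = 1 then s else if d = 2*s - 1 then 2*s else if d = 4*s - 1 then 2*s + 1
      else if 2*s < d then 2*s - 1 - d div 2 else 2*s - d div 2)"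

text \<open>Each case is linear in \<open>a\<close> and \<open>d\<close>, so the properties of a Skolem sequence follow
  by linear arithmetic.\<close>

lemma skolem_4s_cases:
  assumes "2 \<le> s" "d \<in> {1..4*s}" "a = skolem_4s s d"
  shows "(2*a + d = 12*s \<and> 2 \<le> d \<and> d \<le> 4*s) \<or>
    (2*a + d + 1 = 4*s \<and> 2*s < d \<and> d + 3 \<le> 4*s) \<or>
    (2*a + d = 4*s + 1 \<and> 3 \<le> d \<and> d + 3 \<le> 2*s) \<or>
    (d = 1 \<and> a = s) \<or> (d + 1 = 2*s \<and> a = 2*s) \<or> (d + 1 = 4*s \<and> a = 2*s + 1)"
proof (cases "even d")
  case True
  then obtain k where "d = 2*k" by blast
  then show ?thesis using assms by (auto simp: skolem_4s_def)
next
  case False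
  then obtain k where d: "d = 2*k + 1" using oddE by blast
  have "k < 2*s"
    using d assms(2) by simp
  have "d = 1 \<longleftrightarrow> k = 0" "d = 2*s - 1 \<longleftrightarrow> k + 1 = s" "d = 4*s - 1 \<longleftrightarrow> k + 1 = 2*s"
    "2*s < d \<longleftrightarrow> s \<le> k" "d div 2 = k"
    using d assms(1) by auto
  then have "a = (if k = 0 then s else if k + 1 = s then 2*s else if k + 1 = 2*s then 2*s + 1
      else if s \<le> k then 2*s - 1 - k else 2*s - k)"
    using assms(3) False unfolding skolem_4s_def by simp
  then show ?thesis
    using d \<open>k < 2*s\<close> assms(1) by auto
qed

lemma skolem_sequence_4s:
  assumes "2 \<le> s"
  shows "skolem_sequence (4*s) (skolem_4s s)"
proof -
  note cases = skolem_4s_cases[OF assms _ refl]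
  show ?thesis
    unfolding skolem_sequence_def inj_on_def
  proof (intro conjI ballI impI)
    show "1 \<le> skolem_4s s d" "skolem_4s s d + d \<le> 2 * (4*s)" if "d \<in> {1..4*s}" for d
      using cases[OF that] assms by linarith+
  next
    show "d = d'" if "d \<in> {1..4*s}" "d' \<in> {1..4*s}" "skolem_4s s d = skolem_4s s d'" for d d'
      using cases[OF that(1)] cases[OF that(2)] that(3) assms by linarith
  next
    show "d = d'" if "d \<in> {1..4*s}" "d' \<in> {1..4*s}" "skolem_4s s d + d = skolem_4s s d' + d'" for d d'
      using cases[OF that(1)] cases[OF that(2)] that(3) assms by linarith
  next
    have "skolem_4s s d \<noteq> skolem_4s s d' + d'" if "d \<in> {1..4*s}" "d' \<in> {1..4*s}" for d d'
      using cases[OF that(1)] cases[OF that(2)] assms by linarith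
    then show "skolem_4s s ` {1..4*s} \<inter> (\<lambda>d. skolem_4s s d + d) ` {1..4*s} = {}"
      by blast
  qed
qed

lemma skolem_sequence_exists:
  assumes "0 < s"
  shows "\<exists>a. skolem_sequence (4*s) a"
proof (cases "s = 1")
  case True
  then show ?thesis using skolem_sequence_4 by auto
next
  case False
  then have "2 \<le> s" using assms by simp
  then show ?thesis using skolem_sequence_4s by blast
qed

lemma Zm_cordial_friendship:
  assumes "0 < m" "3*j \<le> m" "3*j = m \<Longrightarrow> m mod 12 \<noteq> 6"
  shows "Zm_cordial m (friendship_V j) (friendship_E j)"
proof (cases "even j")
  case False
  then obtain g where "j = 2*g + 1 + 0" by (auto elim: oddE)
  then show ?thesis using Zm_cordial_friendship_zigzag[of 0 g m] assms(2) by simp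
next
  case True
  show ?thesis
  proof (cases "j = 0")
    case True
    then show ?thesis
      using \<open>0 < m\<close> by (intro Zm_cordial_friendshipI[where X = id and Y = id]) auto
  next
    case False
    with \<open>even j\<close> have "\<exists>g. j = 2*g + 1 + 1" by presburger
    then obtain g where j: "j = 2*g + 1 + 1" ..
    show ?thesis
    proof (cases "3*j < m")
      case True
      then show ?thesis using j Zm_cordial_friendship_zigzag[of 1 g m] by simp
    next
      case False
      with assms(2) have "m = 3*j" by simp
      with assms(3) \<open>even j\<close> have "4 dvd j" by presburger
      then obtain s where s: "j = 4*s" ..
      with \<open>j \<noteq> 0\<close> have "0 < s" by simp
      then obtain a where "skolem_sequence (4*s) a"
        using skolem_sequence_exists by blast
      then have "Zm_cordial (3*j) (friendship_V j) (friendship_E j)"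
        using \<open>0 < s\<close> unfolding s by (intro Zm_cordial_friendship_skolem) auto
      then show ?thesis
        using \<open>m = 3*j\<close> by simp
    qed
  qed
qed

theorem corollary9p5:
  fixes m :: nat
  assumes "m \<ge> 1"
  shows "(m mod 12 \<noteq> 6 \<longrightarrow>
            (\<forall>j \<le> m div 3. Zm_cordial m (friendship_V j) (friendship_E j)))
       \<and> (m mod 12 = 6 \<longrightarrow>
            (\<forall>j \<le> m div 3 - 1. Zm_cordial m (friendship_V j) (friendship_E j)))"
proof (intro conjI impI allI)
  fix j assume "m mod 12 \<noteq> 6" "j \<le> m div 3"
  then show "Zm_cordial m (friendship_V j) (friendship_E j)"
    using assms by (intro Zm_cordial_friendship) auto
next
  fix j assume "m mod 12 = 6" "j \<le> m div 3 - 1"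
  then show "Zm_cordial m (friendship_V j) (friendship_E j)"
    using assms by (intro Zm_cordial_friendship) auto
qed

end
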